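(* Consider the real ODE system $$\frac{dp}{dt}=p\,(pR(v_c)-1),\qquad \frac{dv_c}{dt}=-\frac{p}{4}(1+v_c^2),\qquad R(v)=\frac12\left(\frac1v-v\right),$$ and let $\Omega=\{(v,p):v>0,\ -v^{-1}\le p\le v\}$. Then for every initial datum $(v_c(0),p(0))\in\Omega$ the solution satisfies $(v_c(t),p(t))\in\Omega$ for all $t>0$, and $v_c(t)$ cannot reach $0$ or $\infty$ at any finite time; hence the solution exists for all $0<t<\infty$.
   Context: This system is the form, with dissipation coefficient normalized to $\nu=1$, of the pole-dynamics ODEs for the generalized Constantin–Lax–Majda equation with $a=1/2$, $\sigma=0$, written in the variable $p=\omega_{-2,i}/(v_c(1-v_c^2))$. *)

theory Defs
  imports "HOL-Analysis.Analysis"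
begin

definition R :: "real \<Rightarrow> real" where
  "R v = (1/2) * (1/v - v)"

definition Omega :: "(real \<times> real) set" where
  "Omega = {(v, p). v > 0 \<and> - (1/v) \<le> p \<and> p \<le> v}"

text \<open>(v, p) solves the system on the set I (derivatives taken within I, one-sided at endpoints),
  with v nonzero so that R(v) is genuinely defined.\<close>
definition is_solution_on :: "real set \<Rightarrow> (real \<Rightarrow> real) \<Rightarrow> (real \<Rightarrow> real) \<Rightarrow> bool" where
  "is_solution_on I v p \<longleftrightarrow>
     (\<forall>t\<in>I. v t \<noteq> 0 \<and>
        (p has_real_derivative (p t * (p t * R (v t) - 1))) (at t within I) \<and>
        (v has_real_derivative (- (p t / 4) * (1 + (v t)\<^sup>2))) (at t within I))"

end

theory Submission
  imports Defs
begin

text \<open>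
  With the weight \<open>w = 4 p v\<^sup>2 / (1 + v\<^sup>2)\<^sup>2\<close> and
  \<open>\<phi>(v) = 2 arctan v - 2 v (1 - v\<^sup>2) / (1 + v\<^sup>2)\<^sup>2\<close>, whose derivative is
  \<open>16 v\<^sup>2 / (1 + v\<^sup>2)\<^sup>3\<close>, the system gives \<open>w' = -w\<close> and \<open>(\<phi>(v) - w)' = 0\<close>.
  So \<open>w\<close> keeps its sign and decays, while \<open>H = \<phi>(v) - w\<close> is a first integral.
  For \<open>v > 0\<close> the constraints \<open>p \<le> v\<close> and \<open>-1/v \<le> p\<close> read
  \<open>H(v,v) \<le> H(v,p) \<le> H(v,-1/v)\<close>, and both bounds are nondecreasing in \<open>v\<close>.
  If \<open>w \<ge> 0\<close> then \<open>\<phi>(v)\<close>, hence \<open>v\<close>, decreases, so the lower bound only moves away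
  from the conserved value of \<open>H\<close>, and the upper bound holds because \<open>p \<ge> 0\<close>;
  the case \<open>w < 0\<close> is symmetric. Since \<open>\<phi>\<close> maps \<open>(0,\<infinity>)\<close> onto \<open>(0,\<pi>)\<close> and
  \<open>\<phi>(v(t)) = H + w(0) e\<^sup>-\<^sup>t\<close> stays between \<open>H\<close> and \<open>\<phi>(v(0))\<close>, both in \<open>(0,\<pi>)\<close>,
  the solution is given globally by \<open>v(t) = \<phi>\<^sup>-\<^sup>1(H + w(0) e\<^sup>-\<^sup>t)\<close>.
\<close>

definition phi :: "real \<Rightarrow> real" where
  "phi x = 2 * arctan x - 2 * x * (1 - x\<^sup>2) / (1 + x\<^sup>2)\<^sup>2"

definition weight :: "real \<Rightarrow> real \<Rightarrow> real" where
  "weight v p = 4 * p * v\<^sup>2 / (1 + v\<^sup>2)\<^sup>2"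

definition first_integral :: "real \<Rightarrow> real \<Rightarrow> real" where
  "first_integral v p = phi v - weight v p"

lemma one_plus_square_nonzero: "1 + (x::real)\<^sup>2 \<noteq> 0"
  by (metis add_pos_nonneg less_irrefl zero_le_power2 zero_less_one)

lemma has_real_derivative_phi: "(phi has_real_derivative 16 * x\<^sup>2 / (1 + x\<^sup>2) ^ 3) (at x within S)"
  unfolding phi_def
  apply (rule derivative_eq_intros refl)+
  using one_plus_square_nonzero[of x] apply simp
  apply (rule refl)
  using one_plus_square_nonzero[of x]
  apply (simp add: power2_eq_square power3_eq_cube divide_simps)
  apply algebra
  done

lemma first_integral_diag: "first_integral x x = phi x - 4 * x ^ 3 / (1 + x\<^sup>2)\<^sup>2"
  by (simp add: first_integral_def weight_def power3_eq_cube power2_eq_square)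

lemma first_integral_antidiag: "first_integral x (- 1 / x) = phi x + 4 * x / (1 + x\<^sup>2)\<^sup>2"
  by (cases "x = 0") (simp_all add: first_integral_def weight_def power2_eq_square)

lemma has_real_derivative_first_integral_diag:
  "((\<lambda>x. first_integral x x) has_real_derivative 4 * x\<^sup>2 / (1 + x\<^sup>2)\<^sup>2) (at x)"
  unfolding first_integral_diag
  apply (rule derivative_eq_intros refl has_real_derivative_phi)+
  using one_plus_square_nonzero[of x] apply simp
  apply (rule refl)
  using one_plus_square_nonzero[of x]
  apply (simp add: power2_eq_square power3_eq_cube divide_simps)
  apply algebra
  done

lemma has_real_derivative_first_integral_antidiag:
  "((\<lambda>x. first_integral x (- 1 / x)) has_real_derivative 4 / (1 + x\<^sup>2)\<^sup>2) (at x)"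
  unfolding first_integral_antidiag
  apply (rule derivative_eq_intros refl has_real_derivative_phi)+
  using one_plus_square_nonzero[of x] apply simp
  apply (rule refl)
  using one_plus_square_nonzero[of x]
  apply (simp add: power2_eq_square power3_eq_cube divide_simps)
  done

lemma phi_less:
  assumes "0 \<le> a" and "a < b"
  shows "phi a < phi b"
proof (rule DERIV_pos_imp_increasing_open[OF \<open>a < b\<close>])
  fix x :: real assume "a < x" "x < b"
  then have "0 < 16 * x\<^sup>2 / (1 + x\<^sup>2) ^ 3"
    using assms one_plus_square_nonzero[of x] by (simp add: add_pos_nonneg)
  then show "\<exists>y. DERIV phi x :> y \<and> 0 < y" using has_real_derivative_phi by blast
next
  show "continuous_on {a..b} phi"
    by (rule DERIV_continuous_on[OF has_real_derivative_phi])
qed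

lemma phi_le_iff: "0 \<le> a \<Longrightarrow> 0 \<le> b \<Longrightarrow> phi a \<le> phi b \<longleftrightarrow> a \<le> b"
  using phi_less by (metis linorder_not_le order_less_imp_le order_le_less)

lemma phi_pos: "0 < x \<Longrightarrow> 0 < phi x"
  using phi_less[of 0 x] by (simp add: phi_def)

lemma phi_inverse:
  assumes "0 < x"
  shows "phi (1 / x) = pi - phi x"
proof -
  have "arctan (1 / x) = pi / 2 - arctan x"
    using arctan_inverse[of x] assms by (simp add: inverse_eq_divide)
  moreover have "2 * (1 / x) * (1 - (1 / x)\<^sup>2) / (1 + (1 / x)\<^sup>2)\<^sup>2 = - (2 * x * (1 - x\<^sup>2) / (1 + x\<^sup>2)\<^sup>2)"
    using assms one_plus_square_nonzero[of x]
    by (simp add: power2_eq_square divide_simps) (simp add: algebra_simps)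
  ultimately show ?thesis unfolding phi_def by simp
qed

lemma phi_less_pi: "0 < x \<Longrightarrow> phi x < pi"
  using phi_inverse[of x] phi_pos[of "1 / x"] by simp

lemma mono_first_integral_diag: "mono (\<lambda>x. first_integral x x)"
proof (rule monoI, erule DERIV_nonneg_imp_nondecreasing)
  fix x :: real
  have "0 \<le> 4 * x\<^sup>2 / (1 + x\<^sup>2)\<^sup>2" by simp
  then show "\<exists>y. ((\<lambda>x. first_integral x x) has_real_derivative y) (at x) \<and> 0 \<le> y"
    using has_real_derivative_first_integral_diag by blast
qed

lemma mono_first_integral_antidiag: "mono (\<lambda>x. first_integral x (- 1 / x))"
proof (rule monoI, erule DERIV_nonneg_imp_nondecreasing)
  fix x :: real
  have "0 \<le> 4 / (1 + x\<^sup>2)\<^sup>2" by simp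
  then show "\<exists>y. ((\<lambda>x. first_integral x (- 1 / x)) has_real_derivative y) (at x) \<and> 0 \<le> y"
    using has_real_derivative_first_integral_antidiag by blast
qed

lemma first_integral_diag_pos:
  assumes "0 < x"
  shows "0 < first_integral x x"
proof -
  have "first_integral 0 0 < first_integral x x"
  proof (rule DERIV_pos_imp_increasing_open[OF assms])
    fix y :: real assume "0 < y" "y < x"
    then have "0 < 4 * y\<^sup>2 / (1 + y\<^sup>2)\<^sup>2"
      using one_plus_square_nonzero[of y] by simp
    then show "\<exists>z. ((\<lambda>x. first_integral x x) has_real_derivative z) (at y) \<and> 0 < z"
      using has_real_derivative_first_integral_diag by blast
  next
    show "continuous_on {0..x} (\<lambda>x. first_integral x x)"
      by (rule DERIV_continuous_on[OF has_field_derivative_at_within]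
          has_real_derivative_first_integral_diag)+
  qed
  then show ?thesis by (simp add: first_integral_def phi_def weight_def)
qed

(* The inversion v \<mapsto> 1/v swaps the two boundary curves p = v and p = -1/v of Omega. *)
lemma first_integral_antidiag_inverse:
  assumes "0 < x"
  shows "first_integral x (- 1 / x) = pi - first_integral (1 / x) (1 / x)"
  unfolding first_integral_antidiag first_integral_diag phi_inverse[OF assms]
  using assms one_plus_square_nonzero[of x]
  by (simp add: power2_eq_square power3_eq_cube divide_simps) (simp add: algebra_simps)

lemma first_integral_antidiag_less_pi: "0 < x \<Longrightarrow> first_integral x (- 1 / x) < pi"
  using first_integral_antidiag_inverse[of x] first_integral_diag_pos[of "1 / x"] by simp

lemma weight_le_iff: "v \<noteq> 0 \<Longrightarrow> weight v p \<le> weight v q \<longleftrightarrow> p \<le> q"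
proof -
  assume "v \<noteq> 0"
  then have pos: "0 < 4 * v\<^sup>2 / (1 + v\<^sup>2)\<^sup>2"
    using one_plus_square_nonzero[of v] by simp
  have eq: "weight v x = x * (4 * v\<^sup>2 / (1 + v\<^sup>2)\<^sup>2)" for x
    by (simp add: weight_def)
  show ?thesis unfolding eq using pos by (rule mult_le_cancel_right_pos)
qed

lemma weight_nonneg_iff: "v \<noteq> 0 \<Longrightarrow> 0 \<le> weight v p \<longleftrightarrow> 0 \<le> p"
  using weight_le_iff[of v 0 p] by (simp add: weight_def)

lemma first_integral_le_iff: "v \<noteq> 0 \<Longrightarrow> first_integral v p \<le> first_integral v q \<longleftrightarrow> q \<le> p"
  by (simp add: first_integral_def weight_le_iff)

lemma Omega_iff_first_integral:
  "(v, p) \<in> Omega \<longleftrightarrow>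
     0 < v \<and> first_integral v v \<le> first_integral v p \<and> first_integral v p \<le> first_integral v (- 1 / v)"
  by (auto simp: Omega_def first_integral_le_iff)

lemma has_real_derivative_weight_solution:
  assumes "is_solution_on I v p" and "t \<in> I"
  shows "((\<lambda>s. weight (v s) (p s)) has_real_derivative - weight (v t) (p t)) (at t within I)"
proof -
  have nz: "v t \<noteq> 0"
    and dp: "(p has_real_derivative p t * (p t * R (v t) - 1)) (at t within I)"
    and dv: "(v has_real_derivative - (p t / 4) * (1 + (v t)\<^sup>2)) (at t within I)"
    using assms unfolding is_solution_on_def by auto
  show ?thesis
    unfolding weight_def
    apply (rule derivative_eq_intros dp dv refl)+
    using one_plus_square_nonzero[of "v t"] apply simp
    using one_plus_square_nonzero[of "v t"] nz
    apply (simp add: R_def power2_eq_square power3_eq_cube divide_simps)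
    apply algebra
    done
qed

lemma has_real_derivative_first_integral_solution:
  assumes "is_solution_on I v p" and "t \<in> I"
  shows "((\<lambda>s. first_integral (v s) (p s)) has_real_derivative 0) (at t within I)"
proof -
  have dv: "(v has_real_derivative - (p t / 4) * (1 + (v t)\<^sup>2)) (at t within I)"
    using assms unfolding is_solution_on_def by auto
  have "((\<lambda>s. first_integral (v s) (p s)) has_real_derivative
      16 * (v t)\<^sup>2 / (1 + (v t)\<^sup>2) ^ 3 * (- (p t / 4) * (1 + (v t)\<^sup>2)) - - weight (v t) (p t))
      (at t within I)"
    unfolding first_integral_def
    by (intro derivative_intros DERIV_chain2[OF has_real_derivative_phi dv]
        has_real_derivative_weight_solution assms)
  moreover have "16 * (v t)\<^sup>2 / (1 + (v t)\<^sup>2) ^ 3 * (- (p t / 4) * (1 + (v t)\<^sup>2)) = - weight (v t) (p t)"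
    using one_plus_square_nonzero[of "v t"]
    by (simp add: weight_def power2_eq_square power3_eq_cube divide_simps)
  ultimately show ?thesis by simp
qed

lemma weight_solution_eq:
  assumes "is_solution_on I v p" and "convex I" and "0 \<in> I" and "t \<in> I"
  shows "weight (v t) (p t) = weight (v 0) (p 0) * exp (- t)"
proof -
  have "\<exists>c. \<forall>s\<in>I. weight (v s) (p s) * exp s = c"
  proof (rule has_field_derivative_zero_constant[OF \<open>convex I\<close>])
    fix s assume "s \<in> I"
    show "((\<lambda>s. weight (v s) (p s) * exp s) has_real_derivative 0) (at s within I)"
      by (rule derivative_eq_intros has_real_derivative_weight_solution[OF assms(1) \<open>s \<in> I\<close>]
          refl)+ simp
  qed
  then obtain c where "\<And>s. s \<in> I \<Longrightarrow> weight (v s) (p s) * exp s = c" by blast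
  from this[OF \<open>t \<in> I\<close>] this[OF \<open>0 \<in> I\<close>] show ?thesis
    by (simp add: exp_minus field_simps)
qed

lemma first_integral_solution_eq:
  assumes "is_solution_on I v p" and "convex I" and "0 \<in> I" and "t \<in> I"
  shows "first_integral (v t) (p t) = first_integral (v 0) (p 0)"
proof -
  have "\<exists>c. \<forall>s\<in>I. first_integral (v s) (p s) = c"
    using has_real_derivative_first_integral_solution[OF assms(1)]
    by (intro has_field_derivative_zero_constant[OF \<open>convex I\<close>])
  then show ?thesis using assms(3,4) by metis
qed

lemma solution_pos:
  assumes "is_solution_on I v p" and "connected I" and "0 \<in> I" and "0 < v 0" and "t \<in> I"
  shows "0 < v t"
proof (rule ccontr)
  assume "\<not> 0 < v t"
  have "continuous_on I v"
    using assms(1) unfolding is_solution_on_def by (intro DERIV_continuous_on) blast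
  then have "connected (v ` I)" using \<open>connected I\<close> by (rule connected_continuous_image)
  moreover have "v t \<in> v ` I" "v 0 \<in> v ` I" using assms(3,5) by auto
  ultimately have "{v t..v 0} \<subseteq> v ` I" by (rule connected_contains_Icc)
  then have "0 \<in> v ` I" using \<open>\<not> 0 < v t\<close> \<open>0 < v 0\<close> by auto
  then show False using assms(1) unfolding is_solution_on_def by auto
qed

lemma solution_in_Omega:
  assumes sol: "is_solution_on I v p" and I: "convex I" "0 \<in> I" "I \<subseteq> {0..}"
    and init: "(v 0, p 0) \<in> Omega" and t: "t \<in> I"
  shows "(v t, p t) \<in> Omega"
proof -
  let ?H = first_integral
  have v0: "0 < v 0" and H0: "?H (v 0) (v 0) \<le> ?H (v 0) (p 0)" "?H (v 0) (p 0) \<le> ?H (v 0) (- 1 / v 0)"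
    using init by (auto simp: Omega_iff_first_integral)
  have vt: "0 < v t"
    using solution_pos[OF sol convex_connected[OF \<open>convex I\<close>] \<open>0 \<in> I\<close> v0 t] .
  define w0 where "w0 = weight (v 0) (p 0)"
  have wt: "weight (v t) (p t) = w0 * exp (- t)"
    unfolding w0_def using weight_solution_eq[OF sol I(1,2) t] .
  have Ht: "?H (v t) (p t) = ?H (v 0) (p 0)"
    using first_integral_solution_eq[OF sol I(1,2) t] .
  have phi_t: "phi (v t) = phi (v 0) + w0 * (exp (- t) - 1)"
    using Ht wt by (simp add: first_integral_def w0_def algebra_simps)
  have exp_t: "0 < exp (- t)" "exp (- t) \<le> 1"
    using t I(3) by auto
  show ?thesis
  proof (cases "0 \<le> w0")
    case True
    then have "0 \<le> w0 * exp (- t)" by simp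
    then have "0 \<le> p t" using weight_nonneg_iff[of "v t" "p t"] vt wt by simp
    moreover have "- 1 / v t < 0" using vt by simp
    ultimately have right: "- 1 / v t \<le> p t" by linarith
    have "w0 * (exp (- t) - 1) \<le> 0"
      using True exp_t by (simp add: mult_nonneg_nonpos)
    then have "phi (v t) \<le> phi (v 0)" using phi_t by linarith
    then have "v t \<le> v 0" using phi_le_iff vt v0 by simp
    then have "?H (v t) (v t) \<le> ?H (v 0) (v 0)"
      using monoD[OF mono_first_integral_diag \<open>v t \<le> v 0\<close>] by simp
    also have "\<dots> \<le> ?H (v t) (p t)" using H0(1) Ht by simp
    finally show ?thesis
      using vt right by (simp add: Omega_iff_first_integral first_integral_le_iff)
  next
    case False
    then have "w0 * exp (- t) < 0" using exp_t by (simp add: mult_neg_pos)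
    then have "p t < 0" using weight_nonneg_iff[of "v t" "p t"] vt wt by linarith
    then have left: "p t \<le> v t" using vt by simp
    have "0 \<le> w0 * (exp (- t) - 1)"
      using False exp_t by (simp add: mult_nonpos_nonpos)
    then have "phi (v 0) \<le> phi (v t)" using phi_t by linarith
    then have "v 0 \<le> v t" using phi_le_iff vt v0 by simp
    have "?H (v t) (p t) \<le> ?H (v 0) (- 1 / v 0)" using H0(2) Ht by simp
    also have "\<dots> \<le> ?H (v t) (- 1 / v t)"
      using monoD[OF mono_first_integral_antidiag \<open>v 0 \<le> v t\<close>] by simp
    finally show ?thesis
      using vt left by (simp add: Omega_iff_first_integral first_integral_le_iff)
  qed
qed

definition phi_inv :: "real \<Rightarrow> real" where
  "phi_inv y = (THE x. 0 < x \<and> phi x = y)"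

lemma phi_inv_phi:
  assumes "0 < x"
  shows "phi_inv (phi x) = x"
  unfolding phi_inv_def
proof (rule the_equality)
  fix z assume "0 < z \<and> phi z = phi x"
  then show "z = x" using phi_le_iff[of z x] phi_le_iff[of x z] assms by auto
qed (use assms in auto)

lemma phi_less_near_zero:
  assumes "0 < e"
  obtains a where "0 < a" "a \<le> 1" "phi a < e"
proof -
  have "(phi \<longlongrightarrow> phi 0) (at 0)"
    using DERIV_isCont[OF has_real_derivative_phi] by (simp add: isCont_def)
  then have "\<forall>\<^sub>F x in at 0. phi x < e"
    using assms by (auto simp: phi_def dest: order_tendstoD(2))
  then obtain d where "0 < d" and d: "\<And>x. x \<noteq> 0 \<Longrightarrow> dist x 0 < d \<Longrightarrow> phi x < e"
    unfolding eventually_at by auto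
  show ?thesis by (rule that[of "min (d / 2) 1"]) (use \<open>0 < d\<close> d in auto)
qed

lemma phi_phi_inv:
  assumes "0 < y" and "y < pi"
  shows "0 < phi_inv y" and "phi (phi_inv y) = y"
proof -
  obtain a where a: "0 < a" "a \<le> 1" "phi a < min y (pi - y)"
    using phi_less_near_zero[of "min y (pi - y)"] assms by auto
  have "a \<le> 1 / a" using a by (simp add: divide_simps) (metis mult_le_one less_imp_le)
  moreover have "phi a \<le> y" "y \<le> phi (1 / a)" using a phi_inverse[of a] by auto
  ultimately obtain x where x: "a \<le> x" "phi x = y"
    using IVT'[of phi a y "1 / a"] DERIV_continuous_on[OF has_real_derivative_phi] by blast
  then have "0 < x" using a by auto
  with x show "0 < phi_inv y" and "phi (phi_inv y) = y" using phi_inv_phi by metis+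
qed

lemma has_real_derivative_phi_inv:
  assumes "0 < y" and "y < pi"
  shows "(phi_inv has_real_derivative inverse (16 * (phi_inv y)\<^sup>2 / (1 + (phi_inv y)\<^sup>2) ^ 3)) (at y)"
proof (rule DERIV_inverse_function[where f = phi and a = 0 and b = pi])
  have pos: "0 < phi_inv y" using phi_phi_inv[OF assms] by blast
  show "DERIV phi (phi_inv y) :> 16 * (phi_inv y)\<^sup>2 / (1 + (phi_inv y)\<^sup>2) ^ 3"
    by (rule has_real_derivative_phi)
  show "16 * (phi_inv y)\<^sup>2 / (1 + (phi_inv y)\<^sup>2) ^ 3 \<noteq> 0"
    using pos one_plus_square_nonzero[of "phi_inv y"] by simp
  show "\<And>z. 0 < z \<Longrightarrow> z < pi \<Longrightarrow> phi (phi_inv z) = z" using phi_phi_inv by blast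
  have "isCont phi_inv (phi (phi_inv y))"
  proof (rule isCont_inverse_function[where f = phi and x = "phi_inv y" and d = "phi_inv y / 2"])
    show "0 < phi_inv y / 2" using pos by simp
  next
    fix z assume "\<bar>z - phi_inv y\<bar> \<le> phi_inv y / 2"
    then have "0 < z" using pos by linarith
    then show "phi_inv (phi z) = z" by (rule phi_inv_phi)
  next
    show "isCont phi z" for z using DERIV_isCont[OF has_real_derivative_phi] .
  qed
  then show "isCont phi_inv y" using phi_phi_inv[OF assms] by simp
qed (use assms in auto)

lemma solution_exists:
  assumes "(v0, p0) \<in> Omega"
  obtains v p where "is_solution_on {0..} v p" and "v 0 = v0" and "p 0 = p0"
proof -
  define h where "h = first_integral v0 p0"
  define w0 where "w0 = weight v0 p0"
  define y where "y = (\<lambda>t. h + w0 * exp (- t))"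
  define v where "v = (\<lambda>t. phi_inv (y t))"
  \<comment> \<open>chosen so that \<open>weight (v t) (p t) = w0 * exp (- t)\<close>\<close>
  define p where "p = (\<lambda>t. w0 * exp (- t) * (1 + (v t)\<^sup>2)\<^sup>2 / (4 * (v t)\<^sup>2))"
  have v0: "0 < v0" using assms by (simp add: Omega_def)
  have y_range: "y t \<in> {0<..<pi}" if "0 \<le> t" for t
  proof -
    have "0 < first_integral v0 v0" "first_integral v0 (- 1 / v0) < pi"
      using first_integral_diag_pos first_integral_antidiag_less_pi v0 by auto
    then have "h \<in> {0<..<pi}"
      using assms by (auto simp: h_def Omega_iff_first_integral)
    moreover have "phi v0 \<in> {0<..<pi}" using phi_pos phi_less_pi v0 by auto
    moreover have "y t = exp (- t) * phi v0 + (1 - exp (- t)) * h"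
      by (simp add: y_def h_def w0_def first_integral_def algebra_simps)
    ultimately show ?thesis
      using convexD[of "{0<..<pi}" "phi v0" h "exp (- t)" "1 - exp (- t)"] that by simp
  qed
  have v_pos: "0 < v t" if "0 \<le> t" for t
    using phi_phi_inv y_range[OF that] by (simp add: v_def)
  have dv: "(v has_real_derivative - (p t / 4) * (1 + (v t)\<^sup>2)) (at t)" if "0 \<le> t" for t
  proof -
    have "(y has_real_derivative - (w0 * exp (- t))) (at t)"
      unfolding y_def by (auto intro!: derivative_eq_intros)
    then have dv_raw: "(v has_real_derivative
        inverse (16 * (v t)\<^sup>2 / (1 + (v t)\<^sup>2) ^ 3) * - (w0 * exp (- t))) (at t)"
      unfolding v_def using y_range[OF that]
      by (intro DERIV_chain2[OF has_real_derivative_phi_inv]) auto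
    have "inverse (16 * (v t)\<^sup>2 / (1 + (v t)\<^sup>2) ^ 3) * - (w0 * exp (- t))
        = - (p t / 4) * (1 + (v t)\<^sup>2)"
      using v_pos[OF that] one_plus_square_nonzero[of "v t"]
      by (simp add: p_def power2_eq_square power3_eq_cube divide_simps)
    with dv_raw show ?thesis by (simp only:)
  qed
  have dp: "(p has_real_derivative p t * (p t * R (v t) - 1)) (at t)" if "0 \<le> t" for t
    unfolding p_def
    apply (rule derivative_eq_intros dv[OF that] refl)+
    using v_pos[OF that] apply simp
    using v_pos[OF that] one_plus_square_nonzero[of "v t"]
    apply (simp add: p_def R_def power2_eq_square power3_eq_cube divide_simps)
    apply algebra
    done
  have "is_solution_on {0..} v p"
    unfolding is_solution_on_def
    using v_pos[THEN dual_order.strict_implies_not_eq] dv dp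
    by (auto intro: has_field_derivative_at_within)
  moreover have "v 0 = v0"
    using phi_inv_phi[OF v0] by (simp add: v_def y_def h_def w0_def first_integral_def)
  moreover have "p 0 = p0"
    using \<open>v 0 = v0\<close> v0 one_plus_square_nonzero[of v0]
    by (simp add: p_def w0_def weight_def power2_eq_square divide_simps)
  ultimately show ?thesis by (rule that)
qed

theorem theoremA1:
  fixes v0 p0 :: real
  assumes "(v0, p0) \<in> Omega"
  shows "(\<forall>T v p. T > 0 \<and> is_solution_on {0..<T} v p \<and> v 0 = v0 \<and> p 0 = p0
            \<longrightarrow> (\<forall>t\<in>{0..<T}. (v t, p t) \<in> Omega))
       \<and> (\<exists>v p. is_solution_on {0..} v p \<and> v 0 = v0 \<and> p 0 = p0
            \<and> (\<forall>t\<ge>0. (v t, p t) \<in> Omega))"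
proof (intro conjI allI impI ballI)
  fix T v p t
  assume "T > 0 \<and> is_solution_on {0..<T} v p \<and> v 0 = v0 \<and> p 0 = p0" and "t \<in> {0..<T}"
  moreover have "{0..<T} \<subseteq> {0::real..}" by auto
  ultimately show "(v t, p t) \<in> Omega"
    using solution_in_Omega[of "{0..<T}" v p t] assms by auto
next
  obtain v p where sol: "is_solution_on {0..} v p" and "v 0 = v0" "p 0 = p0"
    using solution_exists[OF assms] .
  moreover have "(v t, p t) \<in> Omega" if "0 \<le> t" for t
    using solution_in_Omega[OF sol] assms \<open>v 0 = v0\<close> \<open>p 0 = p0\<close> that by auto
  ultimately show "\<exists>v p. is_solution_on {0..} v p \<and> v 0 = v0 \<and> p 0 = p0
      \<and> (\<forall>t\<ge>0. (v t, p t) \<in> Omega)" by blast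
qed

end
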